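(* Let $3\le k\le d+1$. For $x_1,\ldots,x_k\in\mathbb S^{d-1}$ write $u_{i,j}=\langle x_i,x_j\rangle$, let $W$ be the Gram matrix of $x_3,\ldots,x_k$, $\operatorname{adj}(W)$ its adjugate, and $w_h=(u_{h,3},\ldots,u_{h,k})^T$ for $h=1,2$. Then the kernel $$Q_{k,1}^d(x_1,\ldots,x_k)=\det(W)\,u_{1,2}-w_1^T\operatorname{adj}(W)\,w_2$$ (which equals $\det(W)\langle y_1,y_2\rangle$, where $y_1,y_2$ are the orthogonal projections of $x_1,x_2$ onto the orthogonal complement of $\operatorname{span}\{x_3,\ldots,x_k\}$) is $k$-positive definite, and $I_{Q_{k,1}^d}$ is minimized over $\mathcal P(\mathbb S^{d-1})$ by $\sigma$.
   Context: $\mathbb S^{d-1}$ is the unit sphere in $\mathbb R^d$, $\mathcal P(\mathbb S^{d-1})$ the Borel probability measures, $\sigma$ the normalized surface measure; $I_K(\mu)=\int\cdots\int K(x_1,\ldots,x_k)\,d\mu(x_1)\cdots d\mu(x_k)$. A continuous kernel $K:(\mathbb S^{d-1})^k\to\mathbb R$ symmetric in its first two variables is $k$-positive definite if for all fixed $z_3,\ldots,z_k\in\mathbb S^{d-1}$ and every finite signed Borel measure $\nu$ on $\mathbb S^{d-1}$, $\int\int K(x,y,z_3,\ldots,z_k)\,d\nu(x)d\nu(y)\ge0$. *)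

theory Defs
  imports "HOL-Analysis.Analysis" "HOL-Probability.Probability"
begin

text \<open>Adjugate (classical adjoint) of a square matrix: entry (i,j) is the (j,i) cofactor,
  i.e. the determinant of the matrix obtained by replacing row j by the i-th unit row.\<close>
definition adjugate :: "real^'n^'n \<Rightarrow> real^'n^'n" where
  "adjugate A = (\<chi> i j. det (\<chi> r. if r = j then axis i 1 else A $ r))"

text \<open>Normalized surface measure on the unit sphere of a Euclidean space, realised as the
  cone measure: push forward of the normalized Lebesgue measure on the unit ball under
  radial projection.\<close>
definition sphere_measure :: "'a::euclidean_space measure" where
  "sphere_measure = distr (uniform_measure lborel (ball 0 1)) borel sgn"

definition sphere_prob :: "'a::euclidean_space measure \<Rightarrow> bool" where
  "sphere_prob \<mu> \<longleftrightarrow> sets \<mu> = sets borel \<and> prob_space \<mu> \<and> emeasure \<mu> (sphere 0 1) = 1"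

text \<open>Finite (nonnegative) Borel measures on the sphere; a finite signed Borel measure is
  a difference of two such (Jordan decomposition).\<close>
definition sphere_finite :: "'a::euclidean_space measure \<Rightarrow> bool" where
  "sphere_finite \<nu> \<longleftrightarrow> sets \<nu> = sets borel \<and> finite_measure \<nu> \<and> emeasure \<nu> (- sphere 0 1) = 0"

text \<open>A k-point kernel K(x_1,x_2,z_3,...,z_k), the last k-2 arguments indexed by the
  finite type 'k (so k = CARD('k) + 2).\<close>
definition k_pos_def :: "('a::euclidean_space \<Rightarrow> 'a \<Rightarrow> ('k::finite \<Rightarrow> 'a) \<Rightarrow> real) \<Rightarrow> bool" where
  "k_pos_def K \<longleftrightarrow>
     continuous_on (sphere 0 1 \<times> sphere 0 1 \<times> {z. \<forall>i. z i \<in> sphere 0 1}) (\<lambda>(x, y, z). K x y z)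
   \<and> (\<forall>x y z. K x y z = K y x z)
   \<and> (\<forall>z. (\<forall>i. z i \<in> sphere 0 1) \<longrightarrow>
        (\<forall>\<nu>1 \<nu>2. sphere_finite \<nu>1 \<and> sphere_finite \<nu>2 \<longrightarrow>
           0 \<le> (\<integral>x. (\<integral>y. K x y z \<partial>\<nu>1) \<partial>\<nu>1) - (\<integral>x. (\<integral>y. K x y z \<partial>\<nu>2) \<partial>\<nu>1)
              - (\<integral>x. (\<integral>y. K x y z \<partial>\<nu>1) \<partial>\<nu>2) + (\<integral>x. (\<integral>y. K x y z \<partial>\<nu>2) \<partial>\<nu>2)))"

definition kernel_energy :: "('a::euclidean_space \<Rightarrow> 'a \<Rightarrow> ('k::finite \<Rightarrow> 'a) \<Rightarrow> real) \<Rightarrow> 'a measure \<Rightarrow> real" where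
  "kernel_energy K \<mu> = (\<integral>x. (\<integral>y. (\<integral>z. K x y z \<partial>(PiM UNIV (\<lambda>_. \<mu>))) \<partial>\<mu>) \<partial>\<mu>)"

definition Q_kernel :: "'a::euclidean_space \<Rightarrow> 'a \<Rightarrow> ('k::finite \<Rightarrow> 'a) \<Rightarrow> real" where
  "Q_kernel x1 x2 z =
     (let W = (\<chi> i j. z i \<bullet> z j) :: real^'k^'k;
          w1 = (\<chi> i. x1 \<bullet> z i) :: real^'k;
          w2 = (\<chi> i. x2 \<bullet> z i) :: real^'k
      in det W * (x1 \<bullet> x2) - w1 \<bullet> (adjugate W *v w2))"

end

theory Submission
  imports Defs
begin

text \<open>When the Gram matrix W of the z i is invertible, Cramer's rule shows
  Q x y z = det W * ((x - P x) \<bullet> (y - P y)) with P the orthogonal projection onto the span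
  of the z i; otherwise Q vanishes. As det W \<ge> 0, each Q(-,-,z) is a symmetric positive
  semidefinite bilinear form. Integrating a bilinear form against two measures only sees their
  barycentres m1, m2, so the k-positivity expression equals Q (m1 - m2) (m1 - m2) z \<ge> 0, and
  I_Q(\<mu>) is the integral of Q m m z \<ge> 0 with m the barycentre of \<mu>. The surface measure is
  invariant under x \<mapsto> -x, so its barycentre and hence its energy vanish.\<close>

section \<open>Adjugates and positive semidefinite matrices\<close>

lemma matrix_mult_adjugate: "A ** adjugate A = det A *\<^sub>R mat 1"
  for A :: "real^'n^'n"
proof -
  have "(\<Sum>k\<in>UNIV. A$i$k * adjugate A $ k $ j) = (if i = j then det A else 0)" for i j
  proof -
    have "(\<Sum>k\<in>UNIV. A$i$k * adjugate A $ k $ j) =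
       (\<Sum>k\<in>UNIV. det (\<chi> r. if r = j then A$i$k *s axis k 1 else A $ r))"
      unfolding adjugate_def by (simp add: det_row_mul)
    also have "\<dots> = det (\<chi> r. if r = j then (\<Sum>k\<in>UNIV. A$i$k *s axis k 1) else A $ r)"
      by (rule det_linear_row_sum[symmetric]) simp
    also have "(\<Sum>k\<in>UNIV. A$i$k *s axis k 1) = A$i"
      by (simp add: vec_eq_iff axis_def sum.delta' if_distrib cong: if_cong)
    also have "det (\<chi> r. if r = j then A$i else A $ r) = (if i = j then det A else 0)"
    proof (cases "i = j")
      case True
      then have "(\<chi> r. if r = j then A$i else A $ r) = A" by (simp add: vec_eq_iff)
      with True show ?thesis by simp
    next
      case False
      then show ?thesis
        by (subst det_identical_rows[of i j]) (auto simp: row_def vec_eq_iff)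
    qed
    finally show ?thesis .
  qed
  then show ?thesis by (simp add: matrix_matrix_mult_def mat_def vec_eq_iff)
qed

lemma matrix_vector_mult_adjugate: "A *v (adjugate A *v v) = det A *\<^sub>R v"
  for A :: "real^'n^'n"
proof -
  have "A *v (adjugate A *v v) = (det A *\<^sub>R mat 1) *v v"
    by (simp add: matrix_vector_mul_assoc matrix_mult_adjugate)
  also have "\<dots> = det A *\<^sub>R v"
    by (metis scaleR_matrix_vector_assoc matrix_vector_mul_lid)
  finally show ?thesis .
qed

lemma positive_definite_imp_det_nonzero:
  fixes A :: "real^'n^'n"
  assumes "\<And>v. v \<noteq> 0 \<Longrightarrow> 0 < v \<bullet> (A *v v)"
  shows "det A \<noteq> 0"
proof -
  have "\<forall>v. A *v v = 0 \<longrightarrow> v = 0"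
    using assms by force
  then show ?thesis
    using matrix_left_invertible_ker invertible_left_inverse invertible_det_nz by blast
qed

text \<open>Deform A linearly into the identity: along the way the matrix stays positive definite,
  so its determinant never vanishes and keeps the sign of det (mat 1) = 1.\<close>
lemma positive_semidefinite_imp_det_nonneg:
  fixes A :: "real^'n^'n"
  assumes psd: "\<And>v. 0 \<le> v \<bullet> (A *v v)"
  shows "0 \<le> det A"
proof (rule ccontr)
  assume "\<not> 0 \<le> det A"
  define f where "f s = det (s *\<^sub>R A + (1 - s) *\<^sub>R mat 1)" for s :: real
  have "continuous_on {0..1} f"
    unfolding f_def det_def by (auto intro!: continuous_intros)
  moreover have "f 0 = 1" "f 1 = det A"
    by (simp_all add: f_def)
  ultimately obtain s where s: "0 \<le> s" "s \<le> 1" "f s = 0"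
    using IVT2'[of f 1 0 0] \<open>\<not> 0 \<le> det A\<close> by auto
  have "s \<noteq> 1"
    using s(3) \<open>f 1 = det A\<close> \<open>\<not> 0 \<le> det A\<close> by force
  with s(2) have "s < 1"
    by simp
  have "0 < v \<bullet> ((s *\<^sub>R A + (1 - s) *\<^sub>R mat 1) *v v)" if "v \<noteq> 0" for v
  proof -
    have "v \<bullet> ((s *\<^sub>R A + (1 - s) *\<^sub>R mat 1) *v v) = s * (v \<bullet> (A *v v)) + (1 - s) * (v \<bullet> v)"
      by (simp add: matrix_vector_mult_add_rdistrib inner_add_right
          flip: scaleR_matrix_vector_assoc)
    moreover have "0 < v \<bullet> v"
      using that by simp
    ultimately show ?thesis
      using psd[of v] s(1) \<open>s < 1\<close> by (simp add: add_nonneg_pos)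
  qed
  then have "f s \<noteq> 0"
    unfolding f_def by (rule positive_definite_imp_det_nonzero)
  with s(3) show False
    by simp
qed

section \<open>Gram matrices and the kernel\<close>

definition gram_matrix :: "('k::finite \<Rightarrow> 'a::real_inner) \<Rightarrow> real^'k^'k" where
  "gram_matrix z = (\<chi> i j. z i \<bullet> z j)"

definition inner_products :: "'a::real_inner \<Rightarrow> ('k::finite \<Rightarrow> 'a) \<Rightarrow> real^'k" where
  "inner_products x z = (\<chi> i. x \<bullet> z i)"

definition lincomb :: "('k::finite \<Rightarrow> 'a::real_vector) \<Rightarrow> real^'k \<Rightarrow> 'a" where
  "lincomb z v = (\<Sum>i\<in>UNIV. v $ i *\<^sub>R z i)"

lemma inner_products_inner: "inner_products x z \<bullet> v = x \<bullet> lincomb z v"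
  by (simp add: inner_products_def lincomb_def inner_vec_def inner_sum_right mult.commute)

lemma inner_products_diff: "inner_products (x - y) z = inner_products x z - inner_products y z"
  by (simp add: inner_products_def vec_eq_iff inner_diff_left)

lemma gram_matrix_vector_mult: "gram_matrix z *v v = inner_products (lincomb z v) z"
  by (simp add: gram_matrix_def inner_products_def lincomb_def matrix_vector_mult_def vec_eq_iff
      inner_sum_left inner_commute mult.commute)
     (simp add: inner_sum_right mult.commute)

lemma inner_gram_matrix: "u \<bullet> (gram_matrix z *v v) = lincomb z u \<bullet> lincomb z v"
  by (metis gram_matrix_vector_mult inner_commute inner_products_inner)

lemma det_gram_matrix_nonneg: "0 \<le> det (gram_matrix z)"
  by (rule positive_semidefinite_imp_det_nonneg) (simp add: inner_gram_matrix)

lemma Q_kernel_gram_matrix: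
  "Q_kernel x y z = det (gram_matrix z) * (x \<bullet> y)
     - inner_products x z \<bullet> (adjugate (gram_matrix z) *v inner_products y z)"
  by (simp add: Q_kernel_def Let_def gram_matrix_def inner_products_def)

lemma Q_kernel_eq_inner:
  "Q_kernel x y z = x \<bullet> (det (gram_matrix z) *\<^sub>R y
     - lincomb z (adjugate (gram_matrix z) *v inner_products y z))"
  by (simp add: Q_kernel_gram_matrix inner_products_inner inner_diff_right)

lemma Q_kernel_singular:
  assumes "det (gram_matrix z) = 0"
  shows "Q_kernel x y z = 0"
proof -
  define p where "p = lincomb z (adjugate (gram_matrix z) *v inner_products y z)"
  have "inner_products p z = 0"
    using matrix_vector_mult_adjugate[of "gram_matrix z"] assms
    by (simp add: p_def flip: gram_matrix_vector_mult)
  then have "p \<bullet> p = 0"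
    by (metis inner_products_inner inner_zero_left p_def)
  then show ?thesis
    by (simp add: Q_kernel_eq_inner assms flip: p_def)
qed

text \<open>Cramer's rule: when the Gram matrix is invertible, this is the orthogonal projection
  onto the span of the z i.\<close>
definition gram_projection :: "('k::finite \<Rightarrow> 'a::real_inner) \<Rightarrow> 'a \<Rightarrow> 'a" where
  "gram_projection z x =
     lincomb z ((1 / det (gram_matrix z)) *\<^sub>R (adjugate (gram_matrix z) *v inner_products x z))"

lemma inner_products_gram_projection:
  assumes "det (gram_matrix z) \<noteq> 0"
  shows "inner_products (gram_projection z x) z = inner_products x z"
  using matrix_vector_mult_adjugate[of "gram_matrix z" "inner_products x z"] assms
  by (simp add: gram_projection_def matrix_vector_mult_scaleR flip: gram_matrix_vector_mult)

lemma gram_projection_orthogonal: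
  assumes "det (gram_matrix z) \<noteq> 0"
  shows "(x - gram_projection z x) \<bullet> lincomb z v = 0"
  by (simp add: assms inner_products_diff inner_products_gram_projection flip: inner_products_inner)

lemma Q_kernel_gram_projection:
  assumes "det (gram_matrix z) \<noteq> 0"
  shows "Q_kernel x y z = det (gram_matrix z) * ((x - gram_projection z x) \<bullet> (y - gram_projection z y))"
proof -
  define d where "d = det (gram_matrix z)"
  define t where "t = inner_products x z \<bullet> (adjugate (gram_matrix z) *v inner_products y z)"
  have "gram_projection z x \<bullet> (y - gram_projection z y) = 0"
    using gram_projection_orthogonal[OF assms] by (metis gram_projection_def inner_commute)
  then have "(x - gram_projection z x) \<bullet> (y - gram_projection z y) = x \<bullet> y - x \<bullet> gram_projection z y"
    by (simp add: inner_diff_left inner_diff_right)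
  also have "x \<bullet> gram_projection z y = t / d"
    by (simp add: gram_projection_def t_def d_def flip: inner_products_inner)
  finally have "d * ((x - gram_projection z x) \<bullet> (y - gram_projection z y)) = d * (x \<bullet> y) - t"
    using assms by (simp add: d_def right_diff_distrib)
  then show ?thesis
    by (simp add: Q_kernel_gram_matrix d_def t_def)
qed

lemma Q_kernel_commute: "Q_kernel x y z = Q_kernel y x z"
proof (cases "det (gram_matrix z) = 0")
  case True
  then show ?thesis by (simp add: Q_kernel_singular)
next
  case False
  then show ?thesis by (simp add: Q_kernel_gram_projection inner_commute)
qed

lemma Q_kernel_nonneg: "0 \<le> Q_kernel x x z"
proof (cases "det (gram_matrix z) = 0")
  case True
  then show ?thesis by (simp add: Q_kernel_singular)
next
  case False
  then show ?thesis by (simp add: Q_kernel_gram_projection det_gram_matrix_nonneg)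
qed

lemma bilinear_Q_kernel: "bilinear (\<lambda>x y. Q_kernel x y z)"
proof -
  have "linear (\<lambda>x. Q_kernel x y z)" for y
    unfolding Q_kernel_eq_inner by (rule bounded_linear.linear[OF bounded_linear_inner_left])
  then show ?thesis
    by (simp add: bilinear_def Q_kernel_commute[of _ _ z])
qed

lemma continuous_on_if_const [continuous_intros]:
  "continuous_on S f \<Longrightarrow> continuous_on S g \<Longrightarrow> continuous_on S (\<lambda>x. if P then f x else g x)"
  by (cases P) simp_all

lemma continuous_on_Q_kernel:
  "continuous_on UNIV (\<lambda>(x, y, z). Q_kernel x y (z :: 'k::finite \<Rightarrow> 'a::euclidean_space))"
  unfolding Q_kernel_def Let_def adjugate_def det_def inner_vec_def matrix_vector_mult_def case_prod_beta
  by (simp only: vec_lambda_beta) (intro continuous_intros continuous_on_product_then_coordinatewise)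

lemma continuous_on_Q_kernel_points:
  "continuous_on UNIV (Q_kernel x y :: ('k::finite \<Rightarrow> 'a::euclidean_space) \<Rightarrow> real)"
  using continuous_on_compose2[OF continuous_on_Q_kernel, of UNIV "\<lambda>z. (x, y, z)"]
  by (simp add: continuous_intros)

section \<open>Integrating bilinear forms\<close>

lemma integral_linear_ident:
  fixes f :: "'a::euclidean_space \<Rightarrow> 'b::{banach, second_countable_topology}"
  assumes "linear f" "integrable M (\<lambda>x. x)"
  shows "(\<integral>x. f x \<partial>M) = f (\<integral>x. x \<partial>M)"
  using integral_bounded_linear[of f M "\<lambda>x. x"] assms by (simp add: linear_conv_bounded_linear)

lemma integral_integral_bilinear:
  fixes B :: "'a::euclidean_space \<Rightarrow> 'b::euclidean_space \<Rightarrow> 'c::{banach, second_countable_topology}"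
  assumes "bilinear B" "integrable M (\<lambda>x. x)" "integrable N (\<lambda>y. y)"
  shows "(\<integral>x. (\<integral>y. B x y \<partial>N) \<partial>M) = B (\<integral>x. x \<partial>M) (\<integral>y. y \<partial>N)"
proof -
  have "(\<integral>y. B x y \<partial>N) = B x (\<integral>y. y \<partial>N)" for x
    using assms(1,3) by (simp add: integral_linear_ident bilinear_def)
  then show ?thesis
    using assms(1,2) by (simp add: integral_linear_ident bilinear_def)
qed

lemma bilinear_integral:
  fixes B :: "'a::real_vector \<Rightarrow> 'b::real_vector \<Rightarrow> 'm \<Rightarrow> 'c::{banach, second_countable_topology}"
  assumes "\<And>z. bilinear (\<lambda>x y. B x y z)" "\<And>x y. integrable M (B x y)"
  shows "bilinear (\<lambda>x y. \<integral>z. B x y z \<partial>M)"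
proof -
  have "B (x + x') y = (\<lambda>z. B x y z + B x' y z)" "B x (y + y') = (\<lambda>z. B x y z + B x y' z)"
    "B (c *\<^sub>R x) y = (\<lambda>z. c *\<^sub>R B x y z)" "B x (c *\<^sub>R y) = (\<lambda>z. c *\<^sub>R B x y z)" for x x' y y' c
    by (simp_all add: fun_eq_iff bilinear_ladd[OF assms(1)] bilinear_radd[OF assms(1)]
        bilinear_lmul[OF assms(1)] bilinear_rmul[OF assms(1)])
  then show ?thesis
    using assms(2) by (simp add: bilinear_def linear_iff)
qed

section \<open>Positivity and energy of the kernel\<close>

lemma sphere_prob_imp_sphere_finite:
  assumes "sphere_prob \<mu>"
  shows "sphere_finite \<mu>"
proof -
  interpret prob_space \<mu>
    using assms by (simp add: sphere_prob_def)
  have sets: "sets \<mu> = sets borel"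
    using assms by (simp add: sphere_prob_def)
  have "- sphere 0 1 = space \<mu> - sphere 0 1"
    using sets_eq_imp_space_eq[OF sets] by (simp add: Compl_eq_Diff_UNIV)
  moreover have "emeasure \<mu> (space \<mu> - sphere 0 1) = emeasure \<mu> (space \<mu>) - emeasure \<mu> (sphere 0 1)"
    by (rule emeasure_compl) (simp_all add: sets)
  ultimately show ?thesis
    using assms by (simp add: sphere_prob_def sphere_finite_def emeasure_space_1 finite_measure_axioms)
qed

lemma AE_sphere_if_sphere_finite:
  assumes "sphere_finite \<nu>"
  shows "AE x in \<nu>. x \<in> sphere 0 1"
  using assms by (intro AE_I'[of "- sphere 0 1"] null_setsI) (auto simp: sphere_finite_def)

lemma integrable_ident_if_sphere_finite:
  assumes "sphere_finite \<nu>"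
  shows "integrable \<nu> (\<lambda>x. x)"
proof -
  interpret finite_measure \<nu>
    using assms by (simp add: sphere_finite_def)
  have "AE x in \<nu>. norm x \<le> 1"
    using AE_sphere_if_sphere_finite[OF assms] by eventually_elim simp
  moreover have "(\<lambda>x. x) \<in> borel_measurable \<nu>"
    using assms by (simp add: sphere_finite_def measurable_cong_sets[of \<nu> borel])
  ultimately show ?thesis
    by (rule integrable_const_bound)
qed

lemma k_pos_def_Q_kernel: "k_pos_def (Q_kernel :: 'a::euclidean_space \<Rightarrow> 'a \<Rightarrow> ('k::finite \<Rightarrow> 'a) \<Rightarrow> real)"
proof -
  have double_integral: "(\<integral>x. (\<integral>y. Q_kernel x y z \<partial>\<nu>) \<partial>\<nu>') = Q_kernel (\<integral>x. x \<partial>\<nu>') (\<integral>y. y \<partial>\<nu>) z"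
    if "sphere_finite \<nu>" "sphere_finite \<nu>'" for \<nu> \<nu>' and z :: "'k \<Rightarrow> 'a"
    using that by (intro integral_integral_bilinear bilinear_Q_kernel integrable_ident_if_sphere_finite)
  have "0 \<le> (\<integral>x. (\<integral>y. Q_kernel x y z \<partial>\<nu>1) \<partial>\<nu>1) - (\<integral>x. (\<integral>y. Q_kernel x y z \<partial>\<nu>2) \<partial>\<nu>1)
      - (\<integral>x. (\<integral>y. Q_kernel x y z \<partial>\<nu>1) \<partial>\<nu>2) + (\<integral>x. (\<integral>y. Q_kernel x y z \<partial>\<nu>2) \<partial>\<nu>2)"
    if "sphere_finite \<nu>1" "sphere_finite \<nu>2" for \<nu>1 \<nu>2 and z :: "'k \<Rightarrow> 'a"
  proof -
    define m1 where "m1 = (\<integral>x. x \<partial>\<nu>1)"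
    define m2 where "m2 = (\<integral>x. x \<partial>\<nu>2)"
    have "0 \<le> Q_kernel (m1 - m2) (m1 - m2) z"
      by (rule Q_kernel_nonneg)
    also have "\<dots> = Q_kernel m1 m1 z - Q_kernel m1 m2 z - Q_kernel m2 m1 z + Q_kernel m2 m2 z"
      by (simp add: bilinear_lsub[OF bilinear_Q_kernel] bilinear_rsub[OF bilinear_Q_kernel])
    finally show ?thesis
      using that by (simp add: double_integral m1_def m2_def)
  qed
  moreover have "continuous_on (sphere 0 1 \<times> sphere 0 1 \<times> {z. \<forall>i. z i \<in> sphere 0 1})
      (\<lambda>(x, y, z). Q_kernel x y (z :: 'k \<Rightarrow> 'a))"
    by (rule continuous_on_subset[OF continuous_on_Q_kernel]) simp
  ultimately show ?thesis
    unfolding k_pos_def_def using Q_kernel_commute by blast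
qed

lemma integrable_PiM_sphere:
  fixes f :: "('k::finite \<Rightarrow> 'a::euclidean_space) \<Rightarrow> real"
  assumes \<mu>: "sphere_prob \<mu>" and f: "continuous_on UNIV f"
  shows "integrable (PiM UNIV (\<lambda>_. \<mu>)) f"
proof -
  let ?P = "PiM UNIV (\<lambda>_::'k. \<mu>)"
  let ?S = "PiE UNIV (\<lambda>_::'k. sphere (0::'a) 1)"
  have prob: "prob_space \<mu>" and sets: "sets \<mu> = sets borel"
    using \<mu> by (simp_all add: sphere_prob_def)
  interpret P: prob_space ?P
    by (rule prob_space_PiM) (simp add: prob)
  have "sets ?P = sets (PiM UNIV (\<lambda>_::'k. borel :: 'a measure))"
    by (rule sets_PiM_cong) (simp_all add: sets)
  also have "\<dots> = sets borel"
    by (rule sets_PiM_equal_borel)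
  finally have measurable: "f \<in> borel_measurable ?P"
    using f by (simp add: measurable_cong_sets[of ?P borel] borel_measurable_continuous_onI)
  have "compactin (product_topology (\<lambda>_. euclidean) UNIV) ?S"
    by (simp add: compactin_PiE)
  then have "compact ?S"
    by (metis compactin_euclidean_iff euclidean_product_topology)
  then have "bounded (f ` ?S)"
    using f by (intro compact_imp_bounded compact_continuous_image) (auto intro: continuous_on_subset)
  then obtain B where B: "\<And>z. z \<in> ?S \<Longrightarrow> norm (f z) \<le> B"
    by (auto simp: bounded_iff)
  have "AE z in ?P. z i \<in> sphere 0 1" for i
    using AE_sphere_if_sphere_finite[OF sphere_prob_imp_sphere_finite[OF \<mu>]]
    by (rule AE_PiM_component[rotated 2]) (simp_all add: prob)
  then have "AE z in ?P. \<forall>i\<in>UNIV. z i \<in> sphere 0 1"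
    by (intro AE_finite_allI) simp_all
  then have "AE z in ?P. norm (f z) \<le> B"
    by eventually_elim (rule B, simp add: PiE_UNIV_domain)
  then show ?thesis
    using measurable by (rule P.integrable_const_bound)
qed

lemma kernel_energy_Q_kernel:
  fixes \<mu> :: "'a::euclidean_space measure"
  assumes "sphere_prob \<mu>"
  shows "kernel_energy (Q_kernel :: 'a \<Rightarrow> 'a \<Rightarrow> ('k::finite \<Rightarrow> 'a) \<Rightarrow> real) \<mu>
    = (\<integral>z. Q_kernel (\<integral>x. x \<partial>\<mu>) (\<integral>x. x \<partial>\<mu>) z \<partial>PiM UNIV (\<lambda>_::'k. \<mu>))"
proof -
  have "bilinear (\<lambda>x y. \<integral>z. Q_kernel x y z \<partial>PiM UNIV (\<lambda>_::'k. \<mu>))"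
    using assms by (intro bilinear_integral bilinear_Q_kernel integrable_PiM_sphere
        continuous_on_Q_kernel_points)
  moreover have "integrable \<mu> (\<lambda>x. x)"
    using assms by (intro integrable_ident_if_sphere_finite sphere_prob_imp_sphere_finite)
  ultimately show ?thesis
    unfolding kernel_energy_def by (intro integral_integral_bilinear)
qed

lemma kernel_energy_Q_kernel_nonneg:
  "sphere_prob \<mu> \<Longrightarrow> 0 \<le> kernel_energy (Q_kernel :: 'a::euclidean_space \<Rightarrow> 'a \<Rightarrow> ('k::finite \<Rightarrow> 'a) \<Rightarrow> real) \<mu>"
  by (simp add: kernel_energy_Q_kernel Q_kernel_nonneg)

section \<open>The normalized surface measure\<close>

lemma distr_lborel_uminus: "distr lborel borel uminus = (lborel :: 'a::euclidean_space measure)"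
  using lborel_affine[of "-1" "0::'a"] by (simp add: density_1)

lemma distr_uniform_measure_ball_uminus:
  fixes r :: real
  defines "U \<equiv> uniform_measure lborel (ball (0::'a::euclidean_space) r)"
  shows "distr U borel uminus = U"
proof (rule measure_eqI)
  fix A :: "'a set"
  assume "A \<in> sets (distr U borel uminus)"
  then have A: "A \<in> sets borel"
    by simp
  have uminus: "uminus \<in> measurable U borel"
    by (simp add: measurable_cong_sets[of U borel] U_def)
  have "emeasure (distr U borel uminus) A = emeasure U (uminus -` A)"
    using A emeasure_distr[OF uminus, of A] by (simp add: U_def)
  also have "\<dots> = emeasure lborel (ball 0 r \<inter> uminus -` A) / emeasure lborel (ball (0::'a) r)"
    using measurable_sets_borel[OF _ A, of uminus] by (simp add: U_def)
  also have "ball 0 r \<inter> uminus -` A = uminus -` (ball (0::'a) r \<inter> A)"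
    by auto
  also have "emeasure lborel \<dots> = emeasure lborel (ball 0 r \<inter> A)"
    using A by (subst (2) distr_lborel_uminus[symmetric]) (simp add: emeasure_distr)
  also have "\<dots> / emeasure lborel (ball (0::'a) r) = emeasure U A"
    using A by (simp add: U_def)
  finally show "emeasure (distr U borel uminus) A = emeasure U A" .
qed (simp add: U_def)

lemma prob_space_uniform_measure_unit_ball:
  "prob_space (uniform_measure lborel (ball (0::'a::euclidean_space) 1))"
proof (rule prob_space_uniform_measure)
  have "unit_ball_vol (real DIM('a)) \<noteq> 0"
    using unit_ball_vol_pos[of "real DIM('a)"] by linarith
  then show "emeasure lborel (ball (0::'a) 1) \<noteq> 0"
    by (simp add: emeasure_ball)
  show "emeasure lborel (ball (0::'a) 1) \<noteq> \<infinity>"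
    using emeasure_lborel_ball_finite[of "0::'a" 1] by simp
qed

lemma sphere_prob_sphere_measure: "sphere_prob (sphere_measure :: 'a::euclidean_space measure)"
proof -
  let ?U = "uniform_measure lborel (ball (0::'a) 1)"
  interpret U: prob_space ?U
    by (rule prob_space_uniform_measure_unit_ball)
  have sgn: "sgn \<in> measurable ?U borel"
    by (simp add: measurable_cong_sets[of ?U borel])
  interpret S: prob_space "distr ?U borel sgn"
    using sgn by (rule U.prob_space_distr)
  have "AE x in lborel. x \<in> ball 0 1 \<longrightarrow> x \<noteq> (0::'a)"
    using AE_lborel_singleton[of 0] by eventually_elim simp
  then have "AE x in ?U. x \<noteq> 0"
    by (rule AE_uniform_measureI[rotated]) simp
  then have "AE x in ?U. sgn x \<in> sphere (0::'a) 1"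
    by eventually_elim (simp add: norm_sgn)
  then have "AE x in distr ?U borel sgn. x \<in> sphere (0::'a) 1"
    by (subst AE_distr_iff[OF sgn]) simp_all
  then have "emeasure (distr ?U borel sgn) (sphere (0::'a) 1) = 1"
    by (intro S.emeasure_eq_1_AE) simp
  then show ?thesis
    unfolding sphere_prob_def sphere_measure_def by (simp add: S.prob_space_axioms)
qed

lemma integral_sphere_measure_ident: "(\<integral>x. x \<partial>sphere_measure) = (0::'a::euclidean_space)"
proof -
  let ?U = "uniform_measure lborel (ball (0::'a) 1)"
  have sgn: "sgn \<in> measurable ?U borel" and uminus: "uminus \<in> measurable ?U borel"
    by (simp_all add: measurable_cong_sets[of ?U borel])
  have "(\<integral>x. sgn x \<partial>?U) = (\<integral>x. sgn x \<partial>distr ?U borel uminus)"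
    by (simp only: distr_uniform_measure_ball_uminus)
  also have "\<dots> = (\<integral>x. sgn (- x) \<partial>?U)"
    by (rule integral_distr[OF uminus]) simp
  also have "\<dots> = - (\<integral>x. sgn x \<partial>?U)"
    by (simp add: sgn_minus)
  finally have "(\<integral>x. sgn x \<partial>?U) = 0"
    by (simp add: eq_neg_iff_add_eq_0 flip: scaleR_2)
  moreover have "(\<integral>x. x \<partial>sphere_measure) = (\<integral>x. sgn x \<partial>?U)"
    unfolding sphere_measure_def by (rule integral_distr[OF sgn]) simp
  ultimately show ?thesis
    by simp
qed

lemma kernel_energy_Q_kernel_sphere_measure:
  "kernel_energy (Q_kernel :: 'a::euclidean_space \<Rightarrow> 'a \<Rightarrow> ('k::finite \<Rightarrow> 'a) \<Rightarrow> real) sphere_measure = 0"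
  by (simp add: kernel_energy_Q_kernel sphere_prob_sphere_measure integral_sphere_measure_ident
      bilinear_lzero[OF bilinear_Q_kernel])

theorem lemma6p2:
  assumes "CARD('k::finite) + 1 \<le> DIM('a::euclidean_space)"
  shows "k_pos_def (Q_kernel :: 'a \<Rightarrow> 'a \<Rightarrow> ('k \<Rightarrow> 'a) \<Rightarrow> real)
     \<and> sphere_prob (sphere_measure :: 'a measure)
     \<and> (\<forall>\<mu>::'a measure. sphere_prob \<mu> \<longrightarrow>
          kernel_energy (Q_kernel :: 'a \<Rightarrow> 'a \<Rightarrow> ('k \<Rightarrow> 'a) \<Rightarrow> real) sphere_measure
            \<le> kernel_energy (Q_kernel :: 'a \<Rightarrow> 'a \<Rightarrow> ('k \<Rightarrow> 'a) \<Rightarrow> real) \<mu>)"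
  using k_pos_def_Q_kernel sphere_prob_sphere_measure kernel_energy_Q_kernel_sphere_measure
    kernel_energy_Q_kernel_nonneg by metis

end
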